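(* For every $T>0$ there exist constants $C=C(T)<\infty$ and $c=c(T)>0$ such that for every dyadic $N\in2^{\mathbb N}$, $$\big|\{t\in[0,T]:\ \|e^{it\Delta}\delta_N\|_{L^\infty(\mathbb T)}\le C\sqrt N\}\big|\ge c,$$ where $|\cdot|$ is Lebesgue measure.
   Context: $\mathbb T=\mathbb R/2\pi\mathbb Z$; $e^{it\Delta}$ is the Fourier multiplier $e^{-itn^2}$ on $\mathbb T$. Fix a smooth even $\varphi:\mathbb R\to[0,\infty)$ with $\varphi=1$ on $[-1,1]$ and support in $[-\frac{11}{10},\frac{11}{10}]$; $\delta_N$ is the function on $\mathbb T$ with Fourier coefficients $\hat\delta_N(n)=\varphi(n/N)$, i.e. $\delta_N(x)=\frac1{2\pi}\sum_{n\in\mathbb Z}\varphi(n/N)e^{inx}$. *)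

theory Defs
  imports "HOL-Analysis.Analysis"
begin

definition smooth_fun :: "(real \<Rightarrow> real) \<Rightarrow> bool" where
  "smooth_fun f \<longleftrightarrow> (\<forall>k x. ((deriv ^^ k) f has_real_derivative (deriv ^^ Suc k) f x) (at x))"

definition admissible_cutoff :: "(real \<Rightarrow> real) \<Rightarrow> bool" where
  "admissible_cutoff \<phi> \<longleftrightarrow> smooth_fun \<phi> \<and> (\<forall>x. \<phi> (-x) = \<phi> x) \<and> (\<forall>x. \<phi> x \<ge> 0)
     \<and> (\<forall>x. \<bar>x\<bar> \<le> 1 \<longrightarrow> \<phi> x = 1)
     \<and> (\<forall>x. \<phi> x \<noteq> 0 \<longrightarrow> \<bar>x\<bar> \<le> 11/10)"

text \<open>(e^{it\<Delta>} \<delta>_N)(x) = (1/2\<pi>) \<Sum>_{n\<in>\<int>} \<phi>(n/N) e^{-itn^2} e^{inx}.\<close>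
definition schrod_delta :: "(real \<Rightarrow> real) \<Rightarrow> real \<Rightarrow> real \<Rightarrow> real \<Rightarrow> complex" where
  "schrod_delta \<phi> N t x =
     (\<Sum>\<^sub>\<infinity>n::int. complex_of_real (\<phi> (of_int n / N)) * cis (- t * (of_int n)^2) * cis (of_int n * x))
       / complex_of_real (2 * pi)"

text \<open>L^\<infinity>(\<T>) norm (sup over a period; the functions involved are continuous trig polynomials).\<close>
definition Linf_T :: "(real \<Rightarrow> complex) \<Rightarrow> real" where
  "Linf_T f = (SUP x\<in>{0..2*pi}. norm (f x))"

end

theory Submission
  imports Defs "HOL-Analysis.Kronecker_Approximation_Theorem"
begin

text \<open>
  By Dirichlet's theorem every \<open>t\<close> lies within \<open>2\<pi>/(qN)\<close> of some \<open>2\<pi>p/q\<close> with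
  \<open>q \<le> N\<close>. The times for which some \<open>q \<le> cN\<close> works form a union of arcs of total measure
  \<open>O(cT)\<close>, at most \<open>T/2\<close> for small \<open>c\<close>. Every other time is \<open>t = 2\<pi>p/q + \<beta>\<close> with
  \<open>q > cN\<close> and \<open>|\<beta>| N\<^sup>2 \<le> 2\<pi>/c\<close>, and there the kernel is \<open>O(N/\<surd>q) = O(\<surd>(N/c))\<close>:
  expanding the \<open>q\<close>-periodic phase \<open>exp(-2\<pi>i p n\<^sup>2/q)\<close> in additive characters, whose
  coefficients are quadratic Gauss sums of size \<open>\<surd>(2q)\<close>, leaves \<open>q\<close> shifts of the smooth chirp
  \<open>S(y) = \<Sum>\<^sub>n \<phi>(n/N) exp(-i\<beta>n\<^sup>2 + iny)\<close>. Trivially \<open>S = O(N)\<close>, and summing by parts twice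
  gives \<open>S(y) = O(N\<^sup>-\<^sup>1 |1 - e\<^sup>i\<^sup>y|\<^sup>-\<^sup>2)\<close>; over the \<open>2\<pi>/q\<close>-spaced shifts these add up to \<open>O(N)\<close>.
\<close>

section \<open>Additive characters and quadratic Gauss sums\<close>

definition e_mod :: "int \<Rightarrow> int \<Rightarrow> complex" where
  "e_mod q a = cis (2 * pi * of_int a / of_int q)"

lemma e_mod_add: "e_mod q (a + b) = e_mod q a * e_mod q b"
  by (simp add: e_mod_def cis_mult add_divide_distrib distrib_left)

lemma cnj_e_mod: "cnj (e_mod q a) = e_mod q (- a)"
  by (simp add: e_mod_def cis_cnj)

lemma norm_e_mod [simp]: "norm (e_mod q a) = 1"
  by (simp add: e_mod_def)

lemma e_mod_power: "e_mod q a ^ n = e_mod q (int n * a)"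
  unfolding e_mod_def Complex.DeMoivre by (simp add: algebra_simps)

lemma e_mod_mult_self:
  assumes "q \<noteq> 0"
  shows "e_mod q (q * k) = 1"
proof -
  have "2 * pi * of_int (q * k) / of_int q = 2 * pi * of_int k"
    using assms by (simp add: field_simps)
  then show ?thesis
    by (simp add: e_mod_def cis_multiple_2pi)
qed

lemma e_mod_mod: "q \<noteq> 0 \<Longrightarrow> e_mod q (a mod q) = e_mod q a"
  by (metis e_mod_add e_mod_mult_self mult.right_neutral mult_div_mod_eq add.commute)

lemma e_mod_cong: "q \<noteq> 0 \<Longrightarrow> a mod q = b mod q \<Longrightarrow> e_mod q a = e_mod q b"
  by (metis e_mod_mod)

lemma e_mod_eq_1_iff: "q \<noteq> 0 \<Longrightarrow> e_mod q a = 1 \<longleftrightarrow> q dvd a"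
proof
  assume q: "q \<noteq> 0" and "e_mod q a = 1"
  then obtain i :: int where "2 * pi * of_int a / of_int q = 2 * pi * of_int i"
    by (auto simp: e_mod_def complex_eq_iff cos_one_2pi_int)
  with q have "of_int a = (of_int (q * i) :: real)"
    by (simp add: field_simps)
  then show "q dvd a"
    by (metis dvd_triv_left of_int_eq_iff)
qed (auto simp: e_mod_mult_self)

lemma sum_e_mod:
  assumes "q > 0"
  shows "(\<Sum>j\<in>{0..<q}. e_mod q (j * k)) = (if q dvd k then of_int q else 0)"
proof -
  have "(\<Sum>j\<in>{0..<q}. e_mod q (j * k)) = (\<Sum>j<nat q. e_mod q k ^ j)"
  proof -
    have "{0..<q} = int ` {..<nat q}"
      using assms by (simp add: image_atLeastZeroLessThan_int)
    then show ?thesis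
      by (simp add: sum.reindex e_mod_power)
  qed
  also have "\<dots> = (if q dvd k then of_int q else 0)"
  proof (cases "q dvd k")
    case True
    then show ?thesis
      using assms by (simp add: e_mod_eq_1_iff[THEN iffD2])
  next
    case False
    have "e_mod q k ^ nat q = 1"
      using assms by (simp add: e_mod_power e_mod_mult_self)
    with False assms show ?thesis
      by (simp add: geometric_sum e_mod_eq_1_iff)
  qed
  finally show ?thesis .
qed

lemma sum_periodic_shift:
  fixes F :: "int \<Rightarrow> 'a::comm_monoid_add"
  assumes "q > 0" and "\<And>k. F k = F (k mod q)"
  shows "(\<Sum>m\<in>{0..<q}. F (m + s)) = (\<Sum>m\<in>{0..<q}. F m)"
proof -
  have "(\<Sum>m\<in>{0..<q}. F (m + s)) = (\<Sum>m\<in>{0..<q}. F ((m + s) mod q))"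
    using assms(2) by simp
  also have "\<dots> = (\<Sum>m\<in>{0..<q}. F m)"
    by (rule sum.reindex_bij_witness[where j = "\<lambda>m. (m + s) mod q" and i = "\<lambda>m. (m - s) mod q"])
       (use assms(1) in \<open>auto simp: mod_add_left_eq mod_diff_left_eq\<close>)
  finally show ?thesis .
qed

lemma card_halving_residues_le_2:
  fixes q :: int
  assumes "q > 0"
  shows "card {h\<in>{0..<q}. q dvd 2 * h} \<le> 2"
proof -
  have "{h\<in>{0..<q}. q dvd 2 * h} \<subseteq> {0, q div 2}"
  proof
    fix h assume "h \<in> {h\<in>{0..<q}. q dvd 2 * h}"
    then obtain c where h: "0 \<le> h" "h < q" and c: "2 * h = q * c"
      by auto
    then have "0 \<le> q * c" "q * c < q * 2"
      by linarith+
    with assms have "0 \<le> c" "c < 2"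
      by (meson not_less zero_le_mult_iff, meson mult_less_cancel_left_pos)
    then have "c = 0 \<or> c = 1"
      by auto
    with c show "h \<in> {0, q div 2}"
      by auto
  qed
  then have "card {h\<in>{0..<q}. q dvd 2 * h} \<le> card {0, q div 2}"
    by (rule card_mono[rotated]) auto
  also have "\<dots> \<le> 2"
    by (simp add: card_insert_if)
  finally show ?thesis .
qed

text \<open>Weyl differencing: the inner sum over \<open>m\<close> is a complete character sum, which
  vanishes unless \<open>q | 2h\<close>.\<close>
lemma quadratic_sum_mult_cnj:
  fixes q a j :: int
  assumes q: "q > 0" and "coprime a q"
  defines "\<gamma> \<equiv> \<lambda>m. e_mod q (a * m^2 + j * m)"
  shows "(\<Sum>m\<in>{0..<q}. \<gamma> m) * cnj (\<Sum>m\<in>{0..<q}. \<gamma> m)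
       = (\<Sum>h\<in>{0..<q}. \<gamma> h * (if q dvd 2 * h then of_int q else 0))"
proof -
  have per: "\<gamma> k = \<gamma> (k mod q)" for k
    unfolding \<gamma>_def using q
    by (intro e_mod_cong) (auto, metis mod_add_cong mod_mult_right_eq power_mod)
  have diff: "\<gamma> (h + m) * cnj (\<gamma> m) = \<gamma> h * e_mod q (m * (2 * a * h))" for h m
  proof -
    have "a * (h + m)^2 + j * (h + m) + - (a * m^2 + j * m) = (a * h^2 + j * h) + m * (2 * a * h)"
      by (simp add: power2_eq_square algebra_simps)
    then show ?thesis
      unfolding \<gamma>_def cnj_e_mod by (metis e_mod_add)
  qed
  have inner: "(\<Sum>m\<in>{0..<q}. e_mod q (m * (2 * a * h))) = (if q dvd 2 * h then of_int q else 0)" for h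
  proof -
    have "q dvd 2 * a * h \<longleftrightarrow> q dvd 2 * h"
      using assms(2) by (metis coprime_commute coprime_dvd_mult_right_iff mult.assoc mult.left_commute)
    then show ?thesis
      using sum_e_mod[OF q] by simp
  qed
  have "(\<Sum>m\<in>{0..<q}. \<gamma> m) * cnj (\<Sum>m\<in>{0..<q}. \<gamma> m) = (\<Sum>m\<in>{0..<q}. (\<Sum>h\<in>{0..<q}. \<gamma> (h + m)) * cnj (\<gamma> m))"
    unfolding sum_distrib_right[symmetric] cnj_sum
    using sum_periodic_shift[of q \<gamma>, OF q per] by (simp add: sum_distrib_left mult.commute)
  also have "\<dots> = (\<Sum>m\<in>{0..<q}. \<Sum>h\<in>{0..<q}. \<gamma> h * e_mod q (m * (2 * a * h)))"
    by (simp add: sum_distrib_right diff)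
  also have "\<dots> = (\<Sum>h\<in>{0..<q}. \<gamma> h * (\<Sum>m\<in>{0..<q}. e_mod q (m * (2 * a * h))))"
    by (subst sum.swap) (simp add: sum_distrib_left)
  finally show ?thesis
    by (simp add: inner)
qed

lemma gauss_sum_norm_sq_le:
  assumes q: "q > 0" and "coprime a q"
  shows "norm (\<Sum>m\<in>{0..<q}. e_mod q (a * m^2 + j * m)) ^ 2 \<le> 2 * q"
proof -
  define G where "G = (\<Sum>m\<in>{0..<q}. e_mod q (a * m^2 + j * m))"
  have "norm G ^ 2 = norm (G * cnj G)"
    by (simp add: norm_mult power2_eq_square)
  also have "\<dots> \<le> (\<Sum>h\<in>{0..<q}. if q dvd 2 * h then real_of_int q else 0)"
    unfolding G_def quadratic_sum_mult_cnj[OF assms]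
    using q by (intro order_trans[OF norm_sum] sum_mono) (simp add: norm_mult)
  also have "\<dots> = (\<Sum>h\<in>{h\<in>{0..<q}. q dvd 2 * h}. real_of_int q)"
    by (rule sum.inter_filter[symmetric]) simp
  also have "\<dots> = real (card {h\<in>{0..<q}. q dvd 2 * h}) * q"
    by simp
  also have "\<dots> \<le> 2 * real_of_int q"
    using card_halving_residues_le_2[OF q] q by (intro mult_right_mono) auto
  finally show ?thesis
    by (simp add: G_def)
qed

lemma norm_gauss_sum_le:
  assumes "q > 0" and "coprime a q"
  shows "norm (\<Sum>m\<in>{0..<q}. e_mod q (a * m^2 + j * m)) \<le> sqrt (2 * of_int q)"
  using gauss_sum_norm_sq_le[OF assms] by (simp add: real_le_rsqrt)

lemma e_mod_fourier_inversion:
  fixes g :: "int \<Rightarrow> complex"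
  assumes q: "q > 0" and per: "\<And>k. g k = g (k mod q)"
  shows "g n = (\<Sum>j\<in>{0..<q}. (\<Sum>m\<in>{0..<q}. g m * e_mod q (- (j * m))) * e_mod q (j * n)) / of_int q"
proof -
  have "(\<Sum>j\<in>{0..<q}. (\<Sum>m\<in>{0..<q}. g m * e_mod q (- (j * m))) * e_mod q (j * n))
      = (\<Sum>m\<in>{0..<q}. g m * (\<Sum>j\<in>{0..<q}. e_mod q (j * (n - m))))"
  proof -
    have "(\<Sum>j\<in>{0..<q}. (\<Sum>m\<in>{0..<q}. g m * e_mod q (- (j * m))) * e_mod q (j * n))
        = (\<Sum>j\<in>{0..<q}. \<Sum>m\<in>{0..<q}. g m * e_mod q (j * (n - m)))"
      by (intro sum.cong refl, simp add: sum_distrib_right, intro sum.cong refl)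
         (simp add: mult.assoc e_mod_add[symmetric] algebra_simps)
    also have "\<dots> = (\<Sum>m\<in>{0..<q}. \<Sum>j\<in>{0..<q}. g m * e_mod q (j * (n - m)))"
      by (rule sum.swap)
    finally show ?thesis
      by (simp add: sum_distrib_left)
  qed
  also have "\<dots> = (\<Sum>m\<in>{0..<q}. if m = n mod q then g (n mod q) * of_int q else 0)"
  proof (rule sum.cong[OF refl])
    fix m assume "m \<in> {0..<q}"
    then have "q dvd n - m \<longleftrightarrow> m = n mod q"
      by (auto simp: mod_eq_dvd_iff[symmetric])
    then show "g m * (\<Sum>j\<in>{0..<q}. e_mod q (j * (n - m))) = (if m = n mod q then g (n mod q) * of_int q else 0)"
      by (simp add: sum_e_mod[OF q])
  qed
  also have "\<dots> = g n * of_int q"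
    using q per[of n] by (simp add: sum.delta')
  finally show ?thesis
    using q by simp
qed

section \<open>Second differences and separated sums\<close>

lemma sum_int_interval_shift:
  fixes f :: "int \<Rightarrow> 'a::comm_monoid_add"
  assumes "R \<ge> 0" "f (- R - 1) = 0" "f R = 0"
  shows "(\<Sum>n\<in>{-R..R}. f (n - 1)) = (\<Sum>n\<in>{-R..R}. f n)"
proof -
  have "(\<Sum>n\<in>{-R..R}. f (n - 1)) = (\<Sum>m\<in>{-R-1..R-1}. f m)"
    by (rule sum.reindex_bij_witness[where i = "\<lambda>m. m + 1" and j = "\<lambda>n. n - 1"]) auto
  also have "\<dots> = (\<Sum>m\<in>{-R-1..R}. f m)"
  proof (rule sum.mono_neutral_left)
    have "{-R-1..R} - {-R-1..R-1} = {R}"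
      using assms by auto
    then show "\<forall>i\<in>{-R-1..R} - {-R-1..R-1}. f i = 0"
      using assms by simp
  qed auto
  also have "\<dots> = (\<Sum>m\<in>{-R..R}. f m)"
  proof (rule sum.mono_neutral_right)
    have "{-R-1..R} - {-R..R} = {-R-1}"
      using assms by auto
    then show "\<forall>i\<in>{-R-1..R} - {-R..R}. f i = 0"
      using assms by simp
  qed auto
  finally show ?thesis .
qed

lemma second_difference_summation:
  fixes w :: "int \<Rightarrow> complex"
  assumes "R \<ge> 0" and "\<And>n. \<bar>n\<bar> \<ge> R - 1 \<Longrightarrow> w n = 0"
  shows "(1 - cis y)^2 * (\<Sum>n\<in>{-R..R}. w n * cis (of_int n * y))
       = (\<Sum>n\<in>{-R..R}. (w n - 2 * w (n - 1) + w (n - 2)) * cis (of_int n * y))"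
proof -
  define S where "S = (\<Sum>n\<in>{-R..R}. w n * cis (of_int n * y))"
  have shift1: "(\<Sum>n\<in>{-R..R}. w (n - 1) * cis (of_int (n - 1) * y)) = S"
    unfolding S_def by (rule sum_int_interval_shift[where f = "\<lambda>n. w n * cis (of_int n * y)"])
                       (use assms in auto)
  have shift2: "(\<Sum>n\<in>{-R..R}. w (n - 2) * cis (of_int (n - 2) * y)) = S"
  proof -
    have "(\<Sum>n\<in>{-R..R}. w (n - 1 - 1) * cis (of_int (n - 1 - 1) * y))
        = (\<Sum>n\<in>{-R..R}. w (n - 1) * cis (of_int (n - 1) * y))"
      by (rule sum_int_interval_shift[where f = "\<lambda>n. w (n - 1) * cis (of_int (n - 1) * y)"])
         (use assms in auto)
    then show ?thesis
      using shift1 by (simp add: algebra_simps)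
  qed
  have t1: "(\<Sum>n\<in>{-R..R}. w (n - 1) * cis (of_int n * y)) = cis y * S"
    unfolding shift1[symmetric] sum_distrib_left
    by (intro sum.cong refl) (simp add: cis_mult algebra_simps)
  have t2: "(\<Sum>n\<in>{-R..R}. w (n - 2) * cis (of_int n * y)) = cis y ^ 2 * S"
    unfolding shift2[symmetric] sum_distrib_left
    by (intro sum.cong refl) (simp add: cis_mult power2_eq_square algebra_simps)
  have "(\<Sum>n\<in>{-R..R}. (w n - 2 * w (n - 1) + w (n - 2)) * cis (of_int n * y))
      = S - 2 * (\<Sum>n\<in>{-R..R}. w (n - 1) * cis (of_int n * y)) + (\<Sum>n\<in>{-R..R}. w (n - 2) * cis (of_int n * y))"
    by (simp add: S_def algebra_simps sum.distrib sum_subtractf sum_distrib_left)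
  also have "\<dots> = (1 - cis y)^2 * S"
    unfolding t1 t2 by (simp add: power2_eq_square algebra_simps)
  finally show ?thesis
    by (simp add: S_def)
qed

lemma norm_diff_le_of_vector_derivative_bound:
  fixes f f' :: "real \<Rightarrow> 'a::real_normed_vector"
  assumes "a \<le> b"
    and f': "\<And>s. a \<le> s \<Longrightarrow> s \<le> b \<Longrightarrow> (f has_vector_derivative f' s) (at s)"
    and bound: "\<And>s. a \<le> s \<Longrightarrow> s \<le> b \<Longrightarrow> norm (f' s) \<le> B"
  shows "norm (f b - f a) \<le> B * (b - a)"
proof (cases "a = b")
  case False
  with \<open>a \<le> b\<close> have "a < b"
    by simp
  have "continuous_on {a..b} f"
    using f' by (intro continuous_at_imp_continuous_on ballI has_vector_derivative_continuous) auto
  then have "norm (f b - f a) \<le> B * b - B * a"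
    using \<open>a < b\<close> f' bound
    by (intro differentiable_bound_general[where \<phi> = "\<lambda>s. B * s" and \<phi>' = "\<lambda>_. B" and f' = f'])
       (auto intro!: derivative_eq_intros continuous_intros)
  then show ?thesis
    by (simp add: right_diff_distrib)
qed simp

text \<open>Apply the bound above to \<open>s \<mapsto> w s - w (s - 1)\<close>, whose derivative is a first
  difference of \<open>w'\<close>.\<close>
lemma norm_second_difference_le:
  fixes w w' w'' :: "real \<Rightarrow> 'a::real_normed_vector"
  assumes w': "\<And>s. (w has_vector_derivative w' s) (at s)"
    and w'': "\<And>s. (w' has_vector_derivative w'' s) (at s)"
    and bound: "\<And>s. x - 2 \<le> s \<Longrightarrow> s \<le> x \<Longrightarrow> norm (w'' s) \<le> L"
  shows "norm (w x - 2 *\<^sub>R w (x - 1) + w (x - 2)) \<le> L"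
proof -
  have first_diff: "norm (w' s - w' (s - 1)) \<le> L" if "x - 1 \<le> s" "s \<le> x" for s
    using norm_diff_le_of_vector_derivative_bound[of "s - 1" s w' w'' L] w'' bound that by simp
  have "((\<lambda>s. w (s - 1)) has_vector_derivative w' (s - 1)) (at s)" for s
  proof -
    have "((\<lambda>s. s - 1) has_vector_derivative 1) (at s)"
      by (auto intro!: derivative_eq_intros)
    from vector_diff_chain_at[OF this w'] show ?thesis
      by (simp add: o_def)
  qed
  then have "((\<lambda>s. w s - w (s - 1)) has_vector_derivative w' s - w' (s - 1)) (at s)" for s
    by (intro has_vector_derivative_diff w')
  then have "norm ((w x - w (x - 1)) - (w (x - 1) - w (x - 1 - 1))) \<le> L * (x - (x - 1))"
    by (intro norm_diff_le_of_vector_derivative_bound) (auto intro: first_diff)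
  then show ?thesis
    by (simp add: scaleR_2 algebra_simps)
qed

lemma sin_ge_third:
  assumes "0 \<le> u" "u \<le> pi / 2"
  shows "sin u \<ge> u / 3"
proof -
  have "\<bar>sin u - u\<bar> \<le> u^3 / 6"
    using Maclaurin_sin_bound[of u 3] assms by (simp add: sin_coeff_def eval_nat_numeral)
  moreover have "u^3 / 6 \<le> 2 * u / 3"
  proof -
    have "u^2 \<le> 2^2"
      using assms pi_less_4 by (intro power_mono) auto
    then have "u * u^2 \<le> u * 4"
      using assms by (intro mult_left_mono) auto
    then show ?thesis
      by (simp add: power3_eq_cube power2_eq_square)
  qed
  ultimately show ?thesis
    by linarith
qed

lemma norm_one_minus_cis_ge:
  assumes "\<bar>\<theta>\<bar> \<le> pi"
  shows "norm (1 - cis \<theta>) \<ge> \<bar>\<theta>\<bar> / 3"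
proof -
  have "norm (1 - cis \<theta>) ^ 2 = (1 - cos \<theta>)^2 + (sin \<theta>)^2"
    by (simp add: cmod_def)
  also have "\<dots> = 2 - 2 * cos \<theta>"
    using sin_cos_squared_add[of \<theta>] by (simp add: power2_eq_square algebra_simps)
  also have "\<dots> = (2 * sin (\<bar>\<theta>\<bar> / 2))^2"
    using cos_double_sin[of "\<bar>\<theta>\<bar> / 2"] by (simp add: power_mult_distrib)
  finally have sq: "norm (1 - cis \<theta>) ^ 2 = (2 * sin (\<bar>\<theta>\<bar> / 2))^2" .
  have sin_ge: "sin (\<bar>\<theta>\<bar> / 2) \<ge> \<bar>\<theta>\<bar> / 6"
    using sin_ge_third[of "\<bar>\<theta>\<bar> / 2"] assms by auto
  moreover have "0 \<le> 2 * sin (\<bar>\<theta>\<bar> / 2)"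
    using sin_ge abs_ge_zero[of \<theta>] by linarith
  ultimately have "norm (1 - cis \<theta>) = 2 * sin (\<bar>\<theta>\<bar> / 2)"
    using sq power2_eq_iff_nonneg[of "norm (1 - cis \<theta>)" "2 * sin (\<bar>\<theta>\<bar> / 2)"] by simp
  with sin_ge show ?thesis
    by simp
qed

lemma sum_inverse_squares_le: "(\<Sum>l\<in>{1..n}. 1 / (real l)^2) \<le> 2 - 1 / real (max n 1)"
proof (induction n)
  case (Suc n)
  show ?case
  proof (cases "n = 0")
    case False
    then have n: "real n \<ge> 1"
      by simp
    have "1 / (real (Suc n))^2 \<le> 1 / (real n * real (Suc n))"
      using n by (intro divide_left_mono) (auto simp: power2_eq_square intro!: mult_right_mono)
    also have "\<dots> = 1 / real n - 1 / real (Suc n)"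
      using n by (simp add: field_simps)
    finally show ?thesis
      using Suc False by simp
  qed simp
qed simp

lemma sum_inverse_squares_finite_le:
  assumes "finite L"
  shows "(\<Sum>l\<in>L - {0}. 1 / (real l)^2) \<le> 2"
proof -
  have "(\<Sum>l\<in>L - {0}. 1 / (real l)^2) \<le> (\<Sum>l\<in>{1..Max (insert 0 L)}. 1 / (real l)^2)"
    using assms by (intro sum_mono2) (auto intro: Max_ge)
  also have "\<dots> \<le> 2"
    using sum_inverse_squares_le[of "Max (insert 0 L)"] by (smt (verit) divide_nonneg_nonneg of_nat_0_le_iff)
  finally show ?thesis .
qed

lemma card_floor_level_le_1:
  fixes g :: "'a \<Rightarrow> real"
  assumes "finite J" and sep: "\<And>i j. i \<in> J \<Longrightarrow> j \<in> J \<Longrightarrow> i \<noteq> j \<Longrightarrow> \<bar>g i - g j\<bar> \<ge> 1"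
  shows "card {j\<in>J. \<lfloor>g j\<rfloor> = c} \<le> 1"
proof -
  have "i = j" if "i \<in> {j\<in>J. \<lfloor>g j\<rfloor> = c}" "j \<in> {j\<in>J. \<lfloor>g j\<rfloor> = c}" for i j
  proof (rule ccontr)
    assume "i \<noteq> j"
    with that sep have "\<bar>g i - g j\<bar> \<ge> 1"
      by auto
    moreover have "of_int c \<le> g i" "g i < of_int c + 1" "of_int c \<le> g j" "g j < of_int c + 1"
      using that floor_correct[of "g i"] floor_correct[of "g j"] by auto
    then have "\<bar>g i - g j\<bar> < 1"
      by linarith
    ultimately show False
      by linarith
  qed
  moreover have "finite {j\<in>J. \<lfloor>g j\<rfloor> = c}"
    using assms(1) by simp
  ultimately have "card {j\<in>J. \<lfloor>g j\<rfloor> = c} \<le> Suc 0"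
    by (subst card_le_Suc0_iff_eq) auto
  then show ?thesis
    by simp
qed

lemma card_separated_level_le_2:
  fixes r :: "'a \<Rightarrow> real"
  assumes "finite J" and sep: "\<And>i j. i \<in> J \<Longrightarrow> j \<in> J \<Longrightarrow> i \<noteq> j \<Longrightarrow> \<bar>r i - r j\<bar> \<ge> 1"
  shows "card {j\<in>J. nat \<lfloor>\<bar>r j\<bar>\<rfloor> = l} \<le> 2"
proof -
  define Jp where "Jp = {j\<in>J. r j \<ge> 0}"
  define Jn where "Jn = {j\<in>J. r j < 0}"
  have "{j\<in>J. nat \<lfloor>\<bar>r j\<bar>\<rfloor> = l} \<subseteq> {j\<in>Jp. \<lfloor>r j\<rfloor> = int l} \<union> {j\<in>Jn. \<lfloor>- r j\<rfloor> = int l}"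
    by (auto simp: Jp_def Jn_def)
  then have "card {j\<in>J. nat \<lfloor>\<bar>r j\<bar>\<rfloor> = l}
      \<le> card {j\<in>Jp. \<lfloor>r j\<rfloor> = int l} + card {j\<in>Jn. \<lfloor>- r j\<rfloor> = int l}"
    using assms(1) by (intro order_trans[OF card_mono card_Un_le]) (auto simp: Jp_def Jn_def)
  also have "\<dots> \<le> 1 + 1"
    using assms by (intro add_mono card_floor_level_le_1) (auto simp: Jp_def Jn_def abs_minus_commute)
  finally show ?thesis
    by simp
qed

lemma sum_level_bound_le:
  assumes "finite L" "A \<ge> 0" "D \<ge> 0"
  shows "(\<Sum>l\<in>L. if l = 0 then A else D / (real l)^2) \<le> A + 2 * D"
proof -
  have "(\<Sum>l\<in>L. if l = 0 then A else D / (real l)^2)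
      = (\<Sum>l\<in>L \<inter> {0}. if l = 0 then A else D / (real l)^2) + (\<Sum>l\<in>L - {0}. if l = 0 then A else D / (real l)^2)"
    using assms(1) by (rule sum.Int_Diff)
  also have "(\<Sum>l\<in>L \<inter> {0}. if l = 0 then A else D / (real l)^2) \<le> A"
    using assms(2) by (cases "0 \<in> L") (simp_all add: Int_insert_right)
  also have "(\<Sum>l\<in>L - {0}. if l = 0 then A else D / (real l)^2) = D * (\<Sum>l\<in>L - {0}. 1 / (real l)^2)"
    by (simp add: sum_distrib_left)
  also have "\<dots> \<le> D * 2"
    using sum_inverse_squares_finite_le[OF assms(1)] assms(3) by (rule mult_left_mono)
  finally show ?thesis
    by simp
qed

text \<open>Grouping the terms by \<open>\<lfloor>|r j|\<rfloor>\<close> puts at most two of them on each level \<open>l\<close>, and the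
  terms on level \<open>l > 0\<close> are at most \<open>D / l\<^sup>2\<close>.\<close>
lemma sum_le_of_separated:
  fixes F r :: "'a \<Rightarrow> real"
  assumes "finite J" and sep: "\<And>i j. i \<in> J \<Longrightarrow> j \<in> J \<Longrightarrow> i \<noteq> j \<Longrightarrow> \<bar>r i - r j\<bar> \<ge> 1"
    and FA: "\<And>j. j \<in> J \<Longrightarrow> F j \<le> A"
    and FD: "\<And>j. j \<in> J \<Longrightarrow> r j \<noteq> 0 \<Longrightarrow> F j \<le> D / (r j)^2"
    and "A \<ge> 0" "D \<ge> 0"
  shows "(\<Sum>j\<in>J. F j) \<le> 2 * A + 4 * D"
proof -
  define level where "level j = nat \<lfloor>\<bar>r j\<bar>\<rfloor>" for j
  define bound where "bound l = (if l = 0 then A else D / (real l)^2)" for l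
  have bound_nonneg: "bound l \<ge> 0" for l
    using assms by (simp add: bound_def)
  have F_le: "F j \<le> bound (level j)" if "j \<in> J" for j
  proof (cases "level j = 0")
    case False
    then have l: "real (level j) \<le> \<bar>r j\<bar>" "real (level j) \<ge> 1"
      unfolding level_def by linarith+
    then have "F j \<le> D / (r j)^2"
      using FD[OF that] by auto
    also have "\<dots> \<le> D / (real (level j))^2"
    proof -
      have "(real (level j))^2 \<le> (r j)^2"
        using l by (metis power2_abs power_mono of_nat_0_le_iff)
      then show ?thesis
        using l \<open>D \<ge> 0\<close> by (intro divide_left_mono) auto
    qed
    finally show ?thesis
      using False by (simp add: bound_def)
  qed (use FA that in \<open>simp add: bound_def\<close>)
  have "(\<Sum>j\<in>J. F j) = (\<Sum>l\<in>level ` J. \<Sum>j\<in>{j\<in>J. level j = l}. F j)"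
    by (rule sum.image_gen[OF assms(1)])
  also have "\<dots> \<le> (\<Sum>l\<in>level ` J. 2 * bound l)"
  proof (rule sum_mono)
    fix l
    have "(\<Sum>j\<in>{j\<in>J. level j = l}. F j) \<le> card {j\<in>J. level j = l} * bound l"
      using sum_mono[of "{j\<in>J. level j = l}" F "\<lambda>_. bound l"] F_le by auto
    also have "\<dots> \<le> 2 * bound l"
      using card_separated_level_le_2[OF assms(1) sep, where l = l] bound_nonneg[of l]
      by (intro mult_right_mono) (auto simp: level_def)
    finally show "(\<Sum>j\<in>{j\<in>J. level j = l}. F j) \<le> 2 * bound l" .
  qed
  also have "\<dots> = 2 * (\<Sum>l\<in>level ` J. bound l)"
    by (rule sum_distrib_left[symmetric])
  also have "\<dots> \<le> 2 * (A + 2 * D)"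
    unfolding bound_def using assms by (intro mult_left_mono sum_level_bound_le) auto
  finally show ?thesis
    by simp
qed

definition centred_rem :: "real \<Rightarrow> real \<Rightarrow> real" where
  "centred_rem q x = x - q * \<lfloor>x / q + 1 / 2\<rfloor>"

lemma abs_centred_rem_le:
  assumes "q > 0"
  shows "\<bar>centred_rem q x\<bar> \<le> q / 2"
proof -
  define k where "k = \<lfloor>x / q + 1 / 2\<rfloor>"
  have "of_int k \<le> x / q + 1 / 2" "x / q + 1 / 2 < of_int k + 1"
    unfolding k_def by linarith+
  then have "q * of_int k \<le> x + q / 2" "x + q / 2 < q * of_int k + q"
    using assms by (simp_all add: field_simps)
  then show ?thesis
    unfolding centred_rem_def k_def[symmetric] by linarith
qed

lemma centred_rem_separated:
  fixes q i j :: int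
  assumes "i \<in> {0..<q}" "j \<in> {0..<q}" "i \<noteq> j"
  shows "\<bar>centred_rem q (v + of_int i) - centred_rem q (v + of_int j)\<bar> \<ge> 1"
proof -
  define k where "k i = \<lfloor>(v + of_int i) / of_int q + 1 / 2\<rfloor>" for i
  have diff: "centred_rem q (v + of_int i) - centred_rem q (v + of_int j) = of_int ((i - j) - q * (k i - k j))"
    by (simp add: centred_rem_def k_def algebra_simps)
  have "i - j \<noteq> q * (k i - k j)"
  proof
    assume eq: "i - j = q * (k i - k j)"
    have "\<bar>q * (k i - k j)\<bar> < q * 1"
      using assms unfolding eq[symmetric] by auto
    then have "k i = k j"
      using assms by (auto simp: abs_mult mult_less_cancel_left)
    with eq \<open>i \<noteq> j\<close> show False
      by simp
  qed
  then show ?thesis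
    unfolding diff by linarith
qed

lemma norm_one_minus_cis_ge_centred_rem:
  assumes "q > 0"
  shows "norm (1 - cis (2 * pi * x / q)) \<ge> 2 * \<bar>centred_rem q x\<bar> / q"
proof -
  define \<theta> where "\<theta> = 2 * pi * centred_rem q x / q"
  have "cis (2 * pi * x / q) = cis (\<theta> + 2 * pi * of_int \<lfloor>x / q + 1 / 2\<rfloor>)"
    using assms by (simp add: \<theta>_def centred_rem_def field_simps)
  also have "\<dots> = cis \<theta>"
    by (simp add: cis_mult[symmetric] cis_multiple_2pi)
  finally have "cis (2 * pi * x / q) = cis \<theta>" .
  moreover have "\<bar>\<theta>\<bar> = 2 * pi * \<bar>centred_rem q x\<bar> / q"
    using assms by (simp add: \<theta>_def abs_mult abs_div)
  moreover have "2 * pi * \<bar>centred_rem q x\<bar> / q \<le> 2 * pi * (q / 2) / q"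
    using abs_centred_rem_le[OF assms, of x] assms by (intro divide_right_mono mult_left_mono) auto
  then have "\<bar>\<theta>\<bar> \<le> pi"
    using assms calculation(2) by simp
  moreover have "2 * \<bar>centred_rem q x\<bar> / q \<le> 2 * pi * \<bar>centred_rem q x\<bar> / q / 3"
    using assms pi_gt3 by (simp add: field_simps mult_right_mono)
  ultimately show ?thesis
    using norm_one_minus_cis_ge[of \<theta>] by simp
qed

lemma quadratic_phase_expansion:
  fixes w :: "int \<Rightarrow> complex" and q p :: int
  assumes q: "q > 0" and "finite I"
  defines "G \<equiv> \<lambda>j. \<Sum>m\<in>{0..<q}. e_mod q (- (p * m^2 + j * m))"
  shows "(\<Sum>n\<in>I. w n * e_mod q (- (p * n^2)) * cis (of_int n * x))
       = (\<Sum>j\<in>{0..<q}. G j * (\<Sum>n\<in>I. w n * cis (of_int n * (x + 2 * pi * of_int j / of_int q)))) / of_int q"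
proof -
  define g where "g n = e_mod q (- (p * n^2))" for n
  have per: "g n = g (n mod q)" for n
    unfolding g_def using q
    by (intro e_mod_cong) (auto, metis mod_minus_cong mod_mult_right_eq power_mod)
  have G_eq: "G j = (\<Sum>m\<in>{0..<q}. g m * e_mod q (- (j * m)))" for j
    unfolding G_def g_def by (intro sum.cong refl) (simp add: e_mod_add[symmetric] algebra_simps)
  have shift: "e_mod q (j * n) * cis (of_int n * x) = cis (of_int n * (x + 2 * pi * of_int j / of_int q))" for j n
    unfolding e_mod_def by (simp add: cis_mult algebra_simps)
  have "(\<Sum>n\<in>I. w n * g n * cis (of_int n * x))
      = (\<Sum>n\<in>I. (\<Sum>j\<in>{0..<q}. G j * (w n * (e_mod q (j * n) * cis (of_int n * x)))) / of_int q)"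
    by (subst e_mod_fourier_inversion[of q g, OF q per])
       (simp add: G_eq sum_distrib_left sum_distrib_right sum_divide_distrib algebra_simps)
  also have "\<dots> = (\<Sum>j\<in>{0..<q}. G j * (\<Sum>n\<in>I. w n * cis (of_int n * (x + 2 * pi * of_int j / of_int q)))) / of_int q"
    unfolding shift by (simp add: sum_divide_distrib sum_distrib_left flip: sum.swap[of _ I])
  finally show ?thesis
    by (simp add: g_def)
qed

text \<open>The shifts \<open>x + 2\<pi>j/q\<close> are \<open>2\<pi>/q\<close>-separated on the circle, so the decay
  \<open>|S(y)| \<lesssim> B / |1 - e\<^sup>i\<^sup>y|\<^sup>2\<close> is summable over them.\<close>
lemma sum_norm_shifts_le_of_decay:
  fixes S :: "real \<Rightarrow> complex" and q :: int
  assumes q: "q > 0" and "A \<ge> 0" "B \<ge> 0"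
    and "\<And>y. norm (S y) \<le> A"
    and decay: "\<And>y. norm (S y) * norm (1 - cis y)^2 \<le> B"
  shows "(\<Sum>j\<in>{0..<q}. norm (S (x + 2 * pi * of_int j / of_int q))) \<le> 2 * A + B * (of_int q)^2"
proof -
  define v where "v = of_int q * x / (2 * pi)"
  define r where "r j = centred_rem q (v + of_int j)" for j
  have q': "real_of_int q > 0"
    using q by simp
  have y_eq: "x + 2 * pi * of_int j / of_int q = 2 * pi * (v + of_int j) / of_int q" for j
    using q' by (simp add: v_def field_simps)
  have "norm (S (x + 2 * pi * of_int j / of_int q)) \<le> (B * (of_int q)^2 / 4) / (r j)^2"
    if "r j \<noteq> 0" for j
  proof -
    have "(2 * \<bar>r j\<bar> / of_int q)^2 \<le> norm (1 - cis (x + 2 * pi * of_int j / of_int q))^2"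
      unfolding y_eq r_def using norm_one_minus_cis_ge_centred_rem[OF q'] q' by (intro power_mono) auto
    then have "norm (S (x + 2 * pi * of_int j / of_int q)) * (2 * \<bar>r j\<bar> / of_int q)^2 \<le> B"
      using decay by (smt (verit) mult_left_mono norm_ge_zero)
    then have "norm (S (x + 2 * pi * of_int j / of_int q)) * (4 * (r j)^2 / (of_int q)^2) \<le> B"
      by (simp add: power_divide power_mult_distrib)
    then show ?thesis
      using that q' by (simp add: field_simps)
  qed
  then have "(\<Sum>j\<in>{0..<q}. norm (S (x + 2 * pi * of_int j / of_int q))) \<le> 2 * A + 4 * (B * (of_int q)^2 / 4)"
    using assms by (intro sum_le_of_separated[where r = r]) (auto simp: r_def centred_rem_separated)
  then show ?thesis
    by simp
qed

lemma has_vector_derivative_mult_chirp: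
  fixes p :: "real \<Rightarrow> complex"
  assumes "(p has_vector_derivative p') (at s)"
  shows "((\<lambda>s. p s * cis (- (\<beta> * s^2))) has_vector_derivative
           (p' - \<i> * of_real (2 * \<beta> * s) * p s) * cis (- (\<beta> * s^2))) (at s)"
proof -
  have "((\<lambda>z. exp (- \<i> * of_real \<beta> * z^2)) has_field_derivative
         - \<i> * of_real \<beta> * (2 * of_real s) * exp (- \<i> * of_real \<beta> * (of_real s)^2)) (at (of_real s))"
    by (auto intro!: derivative_eq_intros)
  from has_vector_derivative_real_field[OF this]
  have "((\<lambda>s. cis (- (\<beta> * s^2))) has_vector_derivative - \<i> * of_real (2 * \<beta> * s) * cis (- (\<beta> * s^2))) (at s)"
    by (simp add: cis_conv_exp algebra_simps)
  from has_vector_derivative_mult[OF assms this] show ?thesis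
    by (simp add: algebra_simps)
qed

section \<open>Admissible cutoffs and major arcs\<close>

lemma admissible_cutoff_eq_0:
  "admissible_cutoff \<phi> \<Longrightarrow> \<bar>x\<bar> > 11 / 10 \<Longrightarrow> \<phi> x = 0"
  unfolding admissible_cutoff_def by force

lemma admissible_cutoff_has_derivatives:
  assumes "admissible_cutoff \<phi>"
  shows "(\<phi> has_real_derivative deriv \<phi> x) (at x)"
    and "(deriv \<phi> has_real_derivative deriv (deriv \<phi>) x) (at x)"
    and "(deriv (deriv \<phi>) has_real_derivative deriv (deriv (deriv \<phi>)) x) (at x)"
proof -
  have "\<And>k. ((deriv ^^ k) \<phi> has_real_derivative (deriv ^^ Suc k) \<phi> x) (at x)"
    using assms by (simp add: admissible_cutoff_def smooth_fun_def)
  from this[of 0] this[of 1] this[of 2] show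
    "(\<phi> has_real_derivative deriv \<phi> x) (at x)"
    "(deriv \<phi> has_real_derivative deriv (deriv \<phi>) x) (at x)"
    "(deriv (deriv \<phi>) has_real_derivative deriv (deriv (deriv \<phi>)) x) (at x)"
    by (simp_all add: numeral_2_eq_2)
qed

lemma admissible_cutoff_bounds:
  assumes "admissible_cutoff \<phi>"
  obtains M where "M \<ge> 0"
    "\<And>x. \<bar>x\<bar> \<le> 8 \<Longrightarrow> \<bar>\<phi> x\<bar> \<le> M \<and> \<bar>deriv \<phi> x\<bar> \<le> M \<and> \<bar>deriv (deriv \<phi>) x\<bar> \<le> M"
proof -
  have bounded: "\<exists>B. \<forall>x\<in>{-8..8}. norm (f x) \<le> B"
    if "\<And>x. (f has_real_derivative f' x) (at x)" for f f' :: "real \<Rightarrow> real"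
  proof -
    have "continuous_on {-8..8} f"
      using that by (intro continuous_at_imp_continuous_on) (auto intro: DERIV_isCont)
    then obtain B where "\<And>x. x \<in> {-8..8} \<Longrightarrow> norm (f x) \<le> B"
      using continuous_on_compact_bound[OF compact_Icc] by metis
    then show ?thesis
      by (intro exI[of _ B]) auto
  qed
  note D = admissible_cutoff_has_derivatives[OF assms]
  obtain B0 B1 B2 where B:
      "\<forall>x\<in>{-8..8}. norm (\<phi> x) \<le> B0"
      "\<forall>x\<in>{-8..8}. norm (deriv \<phi> x) \<le> B1"
      "\<forall>x\<in>{-8..8}. norm (deriv (deriv \<phi>) x) \<le> B2"
    using bounded[OF D(1)] bounded[OF D(2)] bounded[OF D(3)] by blast
  show ?thesis
  proof (rule that)
    fix x :: real
    assume "\<bar>x\<bar> \<le> 8"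
    then have "x \<in> {-8..8}"
      by auto
    with B show "\<bar>\<phi> x\<bar> \<le> max (max B0 B1) (max B2 0) \<and> \<bar>deriv \<phi> x\<bar> \<le> max (max B0 B1) (max B2 0)
        \<and> \<bar>deriv (deriv \<phi>) x\<bar> \<le> max (max B0 B1) (max B2 0)"
      by fastforce
  qed simp
qed

definition rational_arc :: "real \<Rightarrow> int \<Rightarrow> int \<Rightarrow> real set" where
  "rational_arc N q p = {2 * pi * of_int p / of_int q - 2 * pi / (of_int q * N) ..
                         2 * pi * of_int p / of_int q + 2 * pi / (of_int q * N)}"

text \<open>The numerators \<open>p \<in> [-q, qK]\<close> are all those that Dirichlet's theorem can produce for
  times in \<open>[0, 2\<pi>(K - 1)]\<close>.\<close>
definition major_arcs :: "int \<Rightarrow> int \<Rightarrow> real \<Rightarrow> real set" where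
  "major_arcs Q K N = (\<Union>q\<in>{1..Q}. \<Union>p\<in>{-q..q * K}. rational_arc N q p)"

lemma measure_rational_arc:
  "q \<ge> 1 \<Longrightarrow> N > 0 \<Longrightarrow> measure lebesgue (rational_arc N q p) = 4 * pi / (of_int q * N)"
  by (simp add: rational_arc_def)

lemma major_arcs_lmeasurable: "major_arcs Q K N \<in> lmeasurable"
  unfolding major_arcs_def rational_arc_def by (intro fmeasurable.finite_UN) auto

lemma measure_major_arcs_le:
  assumes "N > 0" "K \<ge> 1" "Q \<ge> 0"
  shows "measure lebesgue (major_arcs Q K N) \<le> 4 * pi * (of_int K + 2) * of_int Q / N"
proof -
  have "measure lebesgue (major_arcs Q K N) \<le> (\<Sum>q\<in>{1..Q}. \<Sum>p\<in>{-q..q * K}. measure lebesgue (rational_arc N q p))"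
    unfolding major_arcs_def
    by (intro order_trans[OF measure_UNION_le sum_mono] measure_UNION_le) (auto simp: rational_arc_def)
  also have "\<dots> \<le> (\<Sum>q\<in>{1..Q}. 4 * pi * (of_int K + 2) / N)"
  proof (rule sum_mono)
    fix q :: int
    assume "q \<in> {1..Q}"
    then have q: "real_of_int q \<ge> 1"
      by simp
    have "(\<Sum>p\<in>{-q..q * K}. measure lebesgue (rational_arc N q p)) = of_int (q * K + q + 1) * (4 * pi / (of_int q * N))"
      using q assms by (simp add: measure_rational_arc)
    also have "\<dots> \<le> (of_int q * (of_int K + 2)) * (4 * pi / (of_int q * N))"
      using q assms by (intro mult_right_mono) (auto simp: algebra_simps)
    also have "\<dots> = 4 * pi * (of_int K + 2) / N"
      using q assms by (simp add: field_simps)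
    finally show "(\<Sum>p\<in>{-q..q * K}. measure lebesgue (rational_arc N q p)) \<le> 4 * pi * (of_int K + 2) / N" .
  qed
  also have "\<dots> = 4 * pi * (of_int K + 2) * of_int Q / N"
    using assms by simp
  finally show ?thesis .
qed

corollary measure_major_arcs_floor_le:
  assumes "N > 0" "K \<ge> 1" "c > 0"
  shows "measure lebesgue (major_arcs \<lfloor>c * N\<rfloor> K N) \<le> 4 * pi * (of_int K + 2) * c"
proof -
  have "measure lebesgue (major_arcs \<lfloor>c * N\<rfloor> K N) \<le> 4 * pi * (of_int K + 2) * of_int \<lfloor>c * N\<rfloor> / N"
    using assms by (intro measure_major_arcs_le) auto
  also have "\<dots> \<le> 4 * pi * (of_int K + 2) * (c * N) / N"
    using assms by (intro divide_right_mono mult_left_mono) auto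
  also have "\<dots> = 4 * pi * (of_int K + 2) * c"
    using assms by simp
  finally show ?thesis .
qed

lemma Dirichlet_approx_angle:
  fixes N :: nat
  assumes "N > 0"
  obtains p q where "coprime p q" "0 < q" "q \<le> int N"
    "\<bar>of_int q * (t / (2 * pi)) - of_int p\<bar> < 1 / N"
    "\<bar>t - 2 * pi * of_int p / of_int q\<bar> < 2 * pi / (of_int q * N)"
proof -
  obtain p q where cop: "coprime p q" and q: "0 < q" "q \<le> int N"
      and approx: "\<bar>of_int q * (t / (2 * pi)) - of_int p\<bar> < 1 / N"
    using Dirichlet_approx_coprime[OF assms, of "t / (2 * pi)"] by blast
  have q': "real_of_int q > 0"
    using q by simp
  have "t - 2 * pi * of_int p / of_int q = 2 * pi * (of_int q * (t / (2 * pi)) - of_int p) / of_int q"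
    using q' by (simp add: field_simps)
  then have "\<bar>t - 2 * pi * of_int p / of_int q\<bar> = 2 * pi * \<bar>of_int q * (t / (2 * pi)) - of_int p\<bar> / of_int q"
    using q' by (simp add: abs_mult abs_div)
  also have "\<dots> < 2 * pi * (1 / N) / of_int q"
    using approx q' by (intro divide_strict_right_mono mult_strict_left_mono) auto
  finally show ?thesis
    using cop q approx by (intro that) (auto simp: mult.commute)
qed

lemma approximant_numerator_bounds:
  fixes p q K :: int and u :: real
  assumes "0 \<le> u" "u \<le> of_int K - 1" "q > 0" "\<bar>of_int q * u - of_int p\<bar> < 1"
  shows "p \<in> {-q..q * K}"
proof -
  have "0 \<le> of_int q * u" "of_int q * u \<le> of_int q * (of_int K - 1)"
    using assms by (simp_all add: mult_left_mono)
  moreover have "real_of_int q \<ge> 1"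
    using assms(3) by simp
  ultimately have "(of_int (- q) :: real) < of_int p" "(of_int p :: real) < of_int (q * K - q + 1)"
    using assms(4) unfolding abs_less_iff by (simp_all add: algebra_simps)
  then have "- q < p" "p < q * K - q + 1"
    by (simp_all only: of_int_less_iff)
  with assms(3) show ?thesis
    by simp
qed

lemma Dirichlet_off_major_arcs:
  fixes N :: nat
  assumes "N > 0" "t \<in> {0..2 * pi * (of_int K - 1)}" "t \<notin> major_arcs Q K N"
  obtains p q where "coprime p q" "Q < q" "q \<le> int N" "\<bar>t - 2 * pi * of_int p / of_int q\<bar> < 2 * pi / (of_int q * N)"
proof -
  obtain p q where cop: "coprime p q" and q: "0 < q" "q \<le> int N"
      and approx: "\<bar>of_int q * (t / (2 * pi)) - of_int p\<bar> < 1 / N"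
      and close: "\<bar>t - 2 * pi * of_int p / of_int q\<bar> < 2 * pi / (of_int q * N)"
    using Dirichlet_approx_angle[OF assms(1)] by blast
  have "1 / real N \<le> 1"
    using assms(1) by simp
  with approx have "\<bar>of_int q * (t / (2 * pi)) - of_int p\<bar> < 1"
    by linarith
  moreover have "0 \<le> t / (2 * pi)" "t / (2 * pi) \<le> of_int K - 1"
    using assms(2) by (auto simp: field_simps)
  ultimately have p: "p \<in> {-q..q * K}"
    using q by (intro approximant_numerator_bounds) auto
  have "Q < q"
  proof (rule ccontr)
    assume "\<not> Q < q"
    moreover have "t \<in> rational_arc N q p"
      using close by (simp add: rational_arc_def abs_less_iff)
    ultimately have "t \<in> major_arcs Q K N"
      using q p unfolding major_arcs_def by force
    with assms(3) show False
      by simp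
  qed
  with cop q close show ?thesis
    by (intro that) auto
qed

lemma phase_error_bound:
  assumes "c > 0" "N > 0" "c * N < of_int q" "\<bar>\<beta>\<bar> < 2 * pi / (of_int q * N)"
  shows "\<bar>\<beta>\<bar> * N^2 \<le> 2 * pi / c"
proof -
  have "\<bar>\<beta>\<bar> * N^2 \<le> 2 * pi / (of_int q * N) * N^2"
    using assms(4) by (intro mult_right_mono) auto
  also have "\<dots> = 2 * pi / c * (c * N / of_int q)"
    using assms by (simp add: field_simps power2_eq_square)
  also have "\<dots> \<le> 2 * pi / c * 1"
  proof -
    have "0 < c * N"
      using assms by simp
    with assms(3) have "c * N / of_int q \<le> 1"
      by (simp add: divide_le_eq_1)
    with assms show ?thesis
      by (intro mult_left_mono) auto
  qed
  finally show ?thesis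
    by simp
qed

section \<open>The kernel near rational times\<close>

text \<open>\<open>N\<^sup>2\<close> times a bound for the second derivative of the chirp amplitude on \<open>|s| \<le> 8N\<close>,
  where \<open>|\<beta> s| \<le> 8b/N\<close>; the factor \<open>13N\<close> in \<open>weyl_constant\<close> counts the frequencies.\<close>
definition chirp_deriv2_const :: "real \<Rightarrow> real \<Rightarrow> real" where
  "chirp_deriv2_const M b = M * (1 + 34 * b + 256 * b^2)"

definition weyl_constant :: "real \<Rightarrow> real \<Rightarrow> real" where
  "weyl_constant M b = 13 * (2 * M + chirp_deriv2_const M b)"

context
  fixes \<phi> :: "real \<Rightarrow> real" and N M :: real
  assumes adm: "admissible_cutoff \<phi>" and N: "N \<ge> 1" and M: "M \<ge> 0"
    and cutoff_bounds: "\<And>x. \<bar>x\<bar> \<le> 8 \<Longrightarrow> \<bar>\<phi> x\<bar> \<le> M \<and> \<bar>deriv \<phi> x\<bar> \<le> M \<and> \<bar>deriv (deriv \<phi>) x\<bar> \<le> M"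
begin

text \<open>The frequencies \<open>n\<close> with \<open>\<phi>(n/N) \<noteq> 0\<close> lie well inside \<open>[-supp_radius, supp_radius]\<close>,
  leaving room for the two shifts of a second difference.\<close>
definition supp_radius :: int where
  "supp_radius = \<lceil>2 * N\<rceil> + 3"

lemma supp_radius_bounds:
  "supp_radius \<ge> 0" "real_of_int supp_radius \<le> 2 * N + 4" "2 * real_of_int supp_radius + 1 \<le> 13 * N"
proof -
  have "2 * N \<le> of_int \<lceil>2 * N\<rceil>" "of_int \<lceil>2 * N\<rceil> \<le> 2 * N + 1"
    by linarith+
  then show "supp_radius \<ge> 0" "real_of_int supp_radius \<le> 2 * N + 4" "2 * real_of_int supp_radius + 1 \<le> 13 * N"
    using N unfolding supp_radius_def by simp_all linarith+
qed

lemma cutoff_eq_0_outside: "\<bar>n\<bar> \<ge> supp_radius - 1 \<Longrightarrow> \<phi> (of_int n / N) = 0"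
proof -
  assume "\<bar>n\<bar> \<ge> supp_radius - 1"
  then have "real_of_int \<bar>n\<bar> \<ge> 2 * N + 2"
    using ceiling_correct[of "2 * N"] unfolding supp_radius_def by linarith
  then have "\<bar>of_int n / N\<bar> > 11 / 10"
    using N by (simp add: field_simps)
  then show ?thesis
    by (rule admissible_cutoff_eq_0[OF adm])
qed

lemma abs_cutoff_le: "\<bar>\<phi> x\<bar> \<le> M"
  using cutoff_bounds[of x] admissible_cutoff_eq_0[OF adm, of x] M by (cases "\<bar>x\<bar> \<le> 8") auto

lemma norm_sum_supp_radius_le:
  assumes "\<And>n. norm (w n) \<le> M"
  shows "norm (\<Sum>n\<in>{-supp_radius..supp_radius}. w n * cis (of_int n * y)) \<le> 13 * N * M"
proof -
  have "norm (\<Sum>n\<in>{-supp_radius..supp_radius}. w n * cis (of_int n * y)) \<le> (\<Sum>n\<in>{-supp_radius..supp_radius}. M)"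
    using assms by (intro order_trans[OF norm_sum sum_mono]) (simp add: norm_mult)
  also have "\<dots> = (2 * real_of_int supp_radius + 1) * M"
    using supp_radius_bounds(1) by simp
  also have "\<dots> \<le> 13 * N * M"
    using supp_radius_bounds(3) M by (intro mult_right_mono) auto
  finally show ?thesis .
qed

lemma schrod_delta_eq_sum:
  "schrod_delta \<phi> N t x = (\<Sum>n\<in>{-supp_radius..supp_radius}.
     of_real (\<phi> (of_int n / N)) * cis (- t * (of_int n)^2) * cis (of_int n * x)) / of_real (2 * pi)"
proof -
  have "(\<Sum>\<^sub>\<infinity>n::int. of_real (\<phi> (of_int n / N)) * cis (- t * (of_int n)^2) * cis (of_int n * x))
      = (\<Sum>n\<in>{-supp_radius..supp_radius}. of_real (\<phi> (of_int n / N)) * cis (- t * (of_int n)^2) * cis (of_int n * x))"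
    by (subst infsum_cong_neutral[where T = "{-supp_radius..supp_radius}"]) (auto simp: cutoff_eq_0_outside)
  then show ?thesis
    by (simp add: schrod_delta_def)
qed

lemma norm_schrod_delta_le_sum:
  "norm (schrod_delta \<phi> N t x) \<le> norm (\<Sum>n\<in>{-supp_radius..supp_radius}.
     of_real (\<phi> (of_int n / N)) * cis (- t * (of_int n)^2) * cis (of_int n * x))"
  unfolding schrod_delta_eq_sum norm_divide using pi_gt3 by (simp add: divide_le_eq mult_le_cancel_left1)

lemma norm_schrod_delta_le: "norm (schrod_delta \<phi> N t x) \<le> 13 * N * M"
proof -
  have "norm (\<Sum>n\<in>{-supp_radius..supp_radius}. of_real (\<phi> (of_int n / N)) * cis (- t * (of_int n)^2) * cis (of_int n * x))
      \<le> 13 * N * M"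
    by (rule norm_sum_supp_radius_le) (simp add: norm_mult abs_cutoff_le)
  then show ?thesis
    by (rule order_trans[OF norm_schrod_delta_le_sum])
qed

lemma continuous_on_schrod_delta: "continuous_on UNIV (\<lambda>t. schrod_delta \<phi> N t x)"
  unfolding schrod_delta_eq_sum by (intro continuous_intros) auto

lemma cutoff_scaled_has_derivatives:
  "((\<lambda>s. \<phi> (s / N)) has_real_derivative deriv \<phi> (s / N) / N) (at s)"
  "((\<lambda>s. deriv \<phi> (s / N)) has_real_derivative deriv (deriv \<phi>) (s / N) / N) (at s)"
proof -
  have scale: "((\<lambda>s. s / N) has_real_derivative 1 / N) (at s)"
    using N by (auto intro!: derivative_eq_intros)
  note D = admissible_cutoff_has_derivatives[OF adm]
  from DERIV_chain2[OF D(1) scale] DERIV_chain2[OF D(2) scale] show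
    "((\<lambda>s. \<phi> (s / N)) has_real_derivative deriv \<phi> (s / N) / N) (at s)"
    "((\<lambda>s. deriv \<phi> (s / N)) has_real_derivative deriv (deriv \<phi>) (s / N) / N) (at s)"
    by simp_all
qed

context
  fixes \<beta> b :: real
  assumes \<beta>: "\<bar>\<beta>\<bar> * N^2 \<le> b"
begin

lemma chirp_bound_nonneg: "b \<ge> 0"
  using \<beta> by (smt (verit) abs_ge_zero mult_nonneg_nonneg zero_le_power2)

lemma chirp_deriv2_const_nonneg: "chirp_deriv2_const M b \<ge> 0"
  using M chirp_bound_nonneg by (simp add: chirp_deriv2_const_def)

definition chirp_amp :: "real \<Rightarrow> complex" where
  "chirp_amp s = of_real (\<phi> (s / N)) * cis (- (\<beta> * s^2))"

definition chirp_amp' :: "real \<Rightarrow> complex" where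
  "chirp_amp' s = (of_real (deriv \<phi> (s / N) / N) - \<i> * of_real (2 * \<beta> * s) * of_real (\<phi> (s / N)))
     * cis (- (\<beta> * s^2))"

definition chirp_amp'' :: "real \<Rightarrow> complex" where
  "chirp_amp'' s = (of_real (deriv (deriv \<phi>) (s / N) / N^2 - (2 * \<beta> * s)^2 * \<phi> (s / N))
     - \<i> * of_real (2 * \<beta> * \<phi> (s / N) + 2 * (2 * \<beta> * s) * (deriv \<phi> (s / N) / N)))
     * cis (- (\<beta> * s^2))"

lemma chirp_amp_has_vector_derivative: "(chirp_amp has_vector_derivative chirp_amp' s) (at s)"
proof -
  have "((\<lambda>s. of_real (\<phi> (s / N))) has_vector_derivative of_real (deriv \<phi> (s / N) / N)) (at s)"
    by (auto intro!: derivative_eq_intros cutoff_scaled_has_derivatives)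
  from has_vector_derivative_mult_chirp[OF this, of \<beta>] show ?thesis
    unfolding chirp_amp_def[abs_def] chirp_amp'_def by simp
qed

lemma chirp_amp'_has_vector_derivative: "(chirp_amp' has_vector_derivative chirp_amp'' s) (at s)"
proof -
  have "((\<lambda>s. of_real (deriv \<phi> (s / N) / N) - \<i> * of_real (2 * \<beta> * s) * of_real (\<phi> (s / N)))
      has_vector_derivative of_real (deriv (deriv \<phi>) (s / N) / N^2)
        - \<i> * (of_real (2 * \<beta>) * of_real (\<phi> (s / N)) + of_real (2 * \<beta> * s) * of_real (deriv \<phi> (s / N) / N))) (at s)"
    using N by (auto intro!: derivative_eq_intros cutoff_scaled_has_derivatives
                   simp: power2_eq_square field_simps)
  from has_vector_derivative_mult_chirp[OF this, of \<beta>] show ?thesis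
    unfolding chirp_amp'_def[abs_def] chirp_amp''_def by (simp add: power2_eq_square algebra_simps)
qed

lemma norm_chirp_amp''_le:
  assumes "\<bar>s\<bar> \<le> 8 * N"
  shows "norm (chirp_amp'' s) \<le> chirp_deriv2_const M b / N^2"
proof -
  define a0 a1 a2 u where "a0 = \<phi> (s / N)" and "a1 = deriv \<phi> (s / N) / N"
    and "a2 = deriv (deriv \<phi>) (s / N) / N^2" and "u = 2 * \<beta> * s"
  have N0: "N > 0"
    using N by simp
  have "\<bar>s / N\<bar> \<le> 8"
    using assms N0 by (simp add: abs_div divide_le_eq)
  then have a: "\<bar>a0\<bar> \<le> M" "\<bar>a1\<bar> \<le> M / N" "\<bar>a2\<bar> \<le> M / N^2"
    using cutoff_bounds N0 by (auto simp: a0_def a1_def a2_def abs_div intro: divide_right_mono)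
  have \<beta>': "\<bar>\<beta>\<bar> \<le> b / N^2"
    using \<beta> N0 by (simp add: field_simps)
  then have b: "\<bar>2 * \<beta>\<bar> \<le> 2 * b / N^2" "\<bar>u\<bar> \<le> 16 * b / N"
    using assms N0 mult_mono[OF \<beta>' assms] chirp_bound_nonneg by (auto simp: u_def abs_mult power2_eq_square field_simps)
  have "norm (chirp_amp'' s) = norm (of_real (a2 - u^2 * a0) - \<i> * of_real (2 * \<beta> * a0 + 2 * u * a1))"
    unfolding chirp_amp''_def a0_def a1_def a2_def u_def norm_mult norm_cis by (simp only: mult_1_right)
  also have "\<dots> \<le> \<bar>a2 - u^2 * a0\<bar> + \<bar>2 * \<beta> * a0 + 2 * u * a1\<bar>"
    by (rule order_trans[OF norm_triangle_ineq4]) (simp only: norm_mult norm_ii norm_of_real mult_1_left order_refl)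
  also have "\<dots> \<le> \<bar>a2\<bar> + \<bar>u\<bar>^2 * \<bar>a0\<bar> + \<bar>2 * \<beta>\<bar> * \<bar>a0\<bar> + 2 * (\<bar>u\<bar> * \<bar>a1\<bar>)"
  proof -
    have "\<bar>a2 - u^2 * a0\<bar> \<le> \<bar>a2\<bar> + \<bar>u\<bar>^2 * \<bar>a0\<bar>"
      using abs_triangle_ineq4[of a2 "u^2 * a0"] by (simp add: abs_mult)
    moreover have "\<bar>2 * \<beta> * a0 + 2 * u * a1\<bar> \<le> \<bar>2 * \<beta>\<bar> * \<bar>a0\<bar> + 2 * (\<bar>u\<bar> * \<bar>a1\<bar>)"
      using abs_triangle_ineq[of "2 * \<beta> * a0" "2 * u * a1"] by (simp add: abs_mult)
    ultimately show ?thesis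
      by linarith
  qed
  also have "\<dots> \<le> M / N^2 + (16 * b / N)^2 * M + 2 * b / N^2 * M + 2 * (16 * b / N * (M / N))"
    using a b by (intro add_mono mult_mono power_mono mult_left_mono) auto
  also have "\<dots> = chirp_deriv2_const M b / N^2"
    using N0 by (simp add: chirp_deriv2_const_def field_simps power2_eq_square)
  finally show ?thesis .
qed

lemma norm_chirp_amp_second_difference_le:
  assumes "\<bar>x\<bar> \<le> 2 * N + 4"
  shows "norm (chirp_amp x - 2 * chirp_amp (x - 1) + chirp_amp (x - 2)) \<le> chirp_deriv2_const M b / N^2"
proof -
  have "norm (chirp_amp x - 2 *\<^sub>R chirp_amp (x - 1) + chirp_amp (x - 2)) \<le> chirp_deriv2_const M b / N^2"
    using assms N
    by (intro norm_second_difference_le[OF chirp_amp_has_vector_derivative chirp_amp'_has_vector_derivative]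
        norm_chirp_amp''_le) auto
  then show ?thesis
    by (simp add: scaleR_conv_of_real)
qed

definition chirp_sum :: "real \<Rightarrow> complex" where
  "chirp_sum y = (\<Sum>n\<in>{-supp_radius..supp_radius}. chirp_amp (of_int n) * cis (of_int n * y))"

lemma norm_chirp_sum_le: "norm (chirp_sum y) \<le> 13 * N * M"
  unfolding chirp_sum_def by (rule norm_sum_supp_radius_le) (simp add: chirp_amp_def norm_mult abs_cutoff_le)

lemma norm_chirp_sum_decay: "norm (chirp_sum y) * norm (1 - cis y)^2 \<le> 13 * chirp_deriv2_const M b / N"
proof -
  define L where "L = chirp_deriv2_const M b"
  have L: "L \<ge> 0"
    unfolding L_def by (rule chirp_deriv2_const_nonneg)
  have "norm (chirp_sum y) * norm (1 - cis y)^2 = norm ((1 - cis y)^2 * chirp_sum y)"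
    by (simp add: norm_mult norm_power)
  also have "\<dots> = norm (\<Sum>n\<in>{-supp_radius..supp_radius}.
      (chirp_amp (of_int n) - 2 * chirp_amp (of_int (n - 1)) + chirp_amp (of_int (n - 2))) * cis (of_int n * y))"
    unfolding chirp_sum_def
    by (subst second_difference_summation) (auto simp: supp_radius_bounds chirp_amp_def cutoff_eq_0_outside)
  also have "\<dots> \<le> (\<Sum>n\<in>{-supp_radius..supp_radius}. L / N^2)"
    using supp_radius_bounds(2)
    by (intro order_trans[OF norm_sum sum_mono])
       (auto simp: norm_mult L_def intro!: norm_chirp_amp_second_difference_le)
  also have "\<dots> = (2 * real_of_int supp_radius + 1) * (L / N^2)"
    using supp_radius_bounds(1) by simp
  also have "\<dots> \<le> (13 * N) * (L / N^2)"
    using supp_radius_bounds(3) L by (intro mult_right_mono) auto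
  also have "\<dots> = 13 * L / N"
    using N by (simp add: field_simps power2_eq_square)
  finally show ?thesis
    by (simp add: L_def)
qed

lemma sum_norm_chirp_sum_shifts_le:
  assumes "q > 0" and "real_of_int q \<le> N"
  shows "(\<Sum>j\<in>{0..<q}. norm (chirp_sum (x + 2 * pi * of_int j / of_int q))) \<le> weyl_constant M b * N"
proof -
  have "(\<Sum>j\<in>{0..<q}. norm (chirp_sum (x + 2 * pi * of_int j / of_int q)))
      \<le> 2 * (13 * N * M) + 13 * chirp_deriv2_const M b / N * (of_int q)^2"
    using assms(1) M chirp_deriv2_const_nonneg N
    by (intro sum_norm_shifts_le_of_decay norm_chirp_sum_le norm_chirp_sum_decay) auto
  also have "\<dots> \<le> 2 * (13 * N * M) + 13 * chirp_deriv2_const M b / N * N^2"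
    using assms chirp_deriv2_const_nonneg N by (intro add_left_mono mult_left_mono power_mono) auto
  also have "\<dots> = weyl_constant M b * N"
    using N by (simp add: weyl_constant_def field_simps power2_eq_square)
  finally show ?thesis .
qed

lemma norm_sum_rational_time_le:
  assumes q: "q > 0" and "coprime p q" and "real_of_int q \<le> N"
  shows "norm (\<Sum>n\<in>{-supp_radius..supp_radius}.
      of_real (\<phi> (of_int n / N)) * cis (- (2 * pi * of_int p / of_int q + \<beta>) * (of_int n)^2) * cis (of_int n * x))
    \<le> sqrt 2 / sqrt (of_int q) * weyl_constant M b * N"
proof -
  define G where "G j = (\<Sum>m\<in>{0..<q}. e_mod q (- (p * m^2 + j * m)))" for j
  define y where "y j = x + 2 * pi * of_int j / of_int q" for j
  have q': "real_of_int q > 0"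
    using q by simp
  have G_le: "norm (G j) \<le> sqrt (2 * of_int q)" for j
    using norm_gauss_sum_le[OF q, of "- p" "- j"] assms(2) by (simp add: G_def)
  have "(\<Sum>n\<in>{-supp_radius..supp_radius}.
      of_real (\<phi> (of_int n / N)) * cis (- (2 * pi * of_int p / of_int q + \<beta>) * (of_int n)^2) * cis (of_int n * x))
    = (\<Sum>n\<in>{-supp_radius..supp_radius}. chirp_amp (of_int n) * e_mod q (- (p * n^2)) * cis (of_int n * x))"
    by (intro sum.cong refl) (simp add: chirp_amp_def e_mod_def cis_mult algebra_simps)
  also have "\<dots> = (\<Sum>j\<in>{0..<q}. G j * chirp_sum (y j)) / of_int q"
    unfolding G_def y_def chirp_sum_def by (rule quadratic_phase_expansion[OF q]) simp
  finally have "norm (\<Sum>n\<in>{-supp_radius..supp_radius}.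
      of_real (\<phi> (of_int n / N)) * cis (- (2 * pi * of_int p / of_int q + \<beta>) * (of_int n)^2) * cis (of_int n * x))
    \<le> (\<Sum>j\<in>{0..<q}. sqrt (2 * of_int q) * norm (chirp_sum (y j))) / of_int q"
    using q' G_le
    by (auto simp: norm_divide norm_mult intro!: divide_right_mono order_trans[OF norm_sum sum_mono] mult_right_mono)
  also have "\<dots> = sqrt (2 * of_int q) / of_int q * (\<Sum>j\<in>{0..<q}. norm (chirp_sum (y j)))"
    by (simp add: sum_distrib_left[symmetric])
  also have "\<dots> \<le> sqrt (2 * of_int q) / of_int q * (weyl_constant M b * N)"
    using sum_norm_chirp_sum_shifts_le[OF q assms(3)] q' by (intro mult_left_mono) (auto simp: y_def)
  also have "sqrt (2 * of_int q) / of_int q = sqrt 2 / sqrt (of_int q)"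
  proof -
    have "sqrt (of_int q) * sqrt (of_int q) = of_int q"
      using q' by simp
    then show ?thesis
      using q' by (simp add: real_sqrt_mult field_simps)
  qed
  finally show ?thesis
    by (simp add: mult.assoc)
qed

lemma norm_schrod_delta_rational_le:
  assumes "q > 0" and "coprime p q" and "real_of_int q \<le> N"
  shows "norm (schrod_delta \<phi> N (2 * pi * of_int p / of_int q + \<beta>) x)
    \<le> sqrt 2 / sqrt (of_int q) * weyl_constant M b * N"
  using order_trans[OF norm_schrod_delta_le_sum norm_sum_rational_time_le[OF assms]] .

end

lemma compact_Linf_sublevel: "compact {t\<in>{0..T}. Linf_T (schrod_delta \<phi> N t) \<le> y}"
proof -
  have "bdd_above ((\<lambda>x. norm (schrod_delta \<phi> N t x)) ` {0..2 * pi})" for t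
    using norm_schrod_delta_le by (intro bdd_aboveI) auto
  then have "{t\<in>{0..T}. Linf_T (schrod_delta \<phi> N t) \<le> y}
      = {0..T} \<inter> (\<Inter>x\<in>{0..2 * pi}. {t. norm (schrod_delta \<phi> N t x) \<le> y})"
    unfolding Linf_T_def by (auto simp: cSUP_le_iff)
  moreover have "closed (\<Inter>x\<in>{0..2 * pi}. {t. norm (schrod_delta \<phi> N t x) \<le> y})"
    by (intro closed_INT ballI closed_Collect_le continuous_on_norm continuous_on_schrod_delta continuous_on_const)
  ultimately show ?thesis
    by (simp add: compact_Int_closed)
qed

lemma Linf_schrod_delta_le_off_major_arcs:
  fixes Nn :: nat and K :: int
  assumes N_eq: "N = real Nn" and "c > 0" and t: "t \<in> {0..2 * pi * (of_int K - 1)}"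
    and "t \<notin> major_arcs \<lfloor>c * N\<rfloor> K N"
  shows "Linf_T (schrod_delta \<phi> N t) \<le> sqrt 2 * weyl_constant M (2 * pi / c) / sqrt c * sqrt N"
proof -
  have "Nn > 0"
    using N N_eq by simp
  then obtain p q where cop: "coprime p q" and q: "\<lfloor>c * N\<rfloor> < q" "q \<le> int Nn"
      and close: "\<bar>t - 2 * pi * of_int p / of_int q\<bar> < 2 * pi / (of_int q * N)"
    using Dirichlet_off_major_arcs[of Nn t K "\<lfloor>c * N\<rfloor>"] t assms(4) N_eq by auto
  have cN: "c * N < of_int q"
    using q(1) by linarith
  have cN0: "c * N > 0"
    using \<open>c > 0\<close> N by simp
  define \<beta> where "\<beta> = t - 2 * pi * of_int p / of_int q"
  have \<beta>_le: "\<bar>\<beta>\<bar> * N^2 \<le> 2 * pi / c"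
    using close N \<open>c > 0\<close> cN by (intro phase_error_bound) (auto simp: \<beta>_def)
  have W: "weyl_constant M (2 * pi / c) \<ge> 0"
    using M \<open>c > 0\<close> by (simp add: weyl_constant_def chirp_deriv2_const_def)
  have "norm (schrod_delta \<phi> N t x) \<le> sqrt 2 * weyl_constant M (2 * pi / c) / sqrt c * sqrt N" for x
  proof -
    have "norm (schrod_delta \<phi> N t x) \<le> sqrt 2 / sqrt (of_int q) * weyl_constant M (2 * pi / c) * N"
      using norm_schrod_delta_rational_le[OF \<beta>_le, of q p x] cN0 cN cop q N_eq by (simp add: \<beta>_def)
    also have "\<dots> \<le> sqrt 2 / (sqrt c * sqrt N) * weyl_constant M (2 * pi / c) * N"
      using cN cN0 W N
      by (intro mult_right_mono divide_left_mono) (auto simp flip: real_sqrt_mult intro: real_sqrt_le_mono)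
    also have "\<dots> = sqrt 2 * weyl_constant M (2 * pi / c) / sqrt c * sqrt N"
    proof -
      have "sqrt N * sqrt N = N"
        using N by simp
      then show ?thesis
        using \<open>c > 0\<close> N by (simp add: field_simps)
    qed
    finally show ?thesis .
  qed
  then show ?thesis
    unfolding Linf_T_def by (intro cSUP_least) auto
qed

lemma measure_Linf_sublevel_ge:
  fixes Nn :: nat and K :: int
  assumes N_eq: "N = real Nn" and "T > 0" and K: "T / (2 * pi) + 1 \<le> K"
    and c: "c = T / (8 * pi * (of_int K + 2))"
  shows "measure lebesgue {t\<in>{0..T}. Linf_T (schrod_delta \<phi> N t) \<le> sqrt 2 * weyl_constant M (2 * pi / c) / sqrt c * sqrt N}
    \<ge> T / 2"
    (is "measure lebesgue ?A \<ge> _")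
proof -
  define Bad where "Bad = major_arcs \<lfloor>c * N\<rfloor> K N"
  have K1: "of_int K \<ge> (1 :: real)"
    using K \<open>T > 0\<close> by (smt (verit) divide_nonneg_nonneg pi_gt_zero)
  have c0: "c > 0"
    using c \<open>T > 0\<close> K1 by simp
  have "measure lebesgue Bad \<le> 4 * pi * (of_int K + 2) * c"
    unfolding Bad_def using K1 c0 N by (intro measure_major_arcs_floor_le) auto
  also have "\<dots> = T / 2"
    using K1 unfolding c by (simp add: divide_simps)
  finally have Bad_le: "measure lebesgue Bad \<le> T / 2" .
  have "{0..T} - Bad \<subseteq> ?A"
  proof
    fix t
    assume t: "t \<in> {0..T} - Bad"
    then have "t \<in> {0..2 * pi * (of_int K - 1)}"
      using K by (auto simp: field_simps)
    with t show "t \<in> ?A"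
      using Linf_schrod_delta_le_off_major_arcs[OF N_eq c0] by (auto simp: Bad_def)
  qed
  then have "measure lebesgue ({0..T} - Bad) \<le> measure lebesgue ?A"
    using lmeasurable_compact[OF compact_Linf_sublevel] major_arcs_lmeasurable
    by (intro measure_mono_fmeasurable) (auto simp: Bad_def)
  moreover have "measure lebesgue {0..T} - measure lebesgue Bad \<le> measure lebesgue ({0..T} - Bad)"
    using major_arcs_lmeasurable by (intro measure_diff_le_measure_setdiff) (auto simp: Bad_def)
  moreover have "measure lebesgue {0..T} = T"
    using \<open>T > 0\<close> by simp
  ultimately show ?thesis
    using Bad_le by linarith
qed

end

theorem lemma6p2:
  fixes \<phi> :: "real \<Rightarrow> real" and T :: real
  assumes "admissible_cutoff \<phi>" and "T > 0"
  shows "\<exists>C c::real. c > 0 \<and>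
    (\<forall>k::nat. measure lebesgue
        {t \<in> {0..T}. Linf_T (schrod_delta \<phi> (2 ^ k) t) \<le> C * sqrt (2 ^ k)} \<ge> c)"
proof -
  obtain M where M: "M \<ge> 0"
    and bounds: "\<And>x. \<bar>x\<bar> \<le> 8 \<Longrightarrow> \<bar>\<phi> x\<bar> \<le> M \<and> \<bar>deriv \<phi> x\<bar> \<le> M \<and> \<bar>deriv (deriv \<phi>) x\<bar> \<le> M"
    using admissible_cutoff_bounds[OF assms(1)] by blast
  define K :: int where "K = \<lceil>T / (2 * pi)\<rceil> + 1"
  define c where "c = T / (8 * pi * (of_int K + 2))"
  have K: "T / (2 * pi) + 1 \<le> of_int K"
    unfolding K_def by linarith
  show ?thesis
  proof (intro exI conjI allI)
    fix k :: nat
    show "measure lebesgue {t \<in> {0..T}. Linf_T (schrod_delta \<phi> (2 ^ k) t)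
        \<le> sqrt 2 * weyl_constant M (2 * pi / c) / sqrt c * sqrt (2 ^ k)} \<ge> T / 2"
    proof (rule measure_Linf_sublevel_ge[OF assms(1) _ M bounds _ assms(2) K c_def])
      show "(2 :: real) ^ k \<ge> 1"
        by simp
      show "(2 :: real) ^ k = real (2 ^ k)"
        by simp
    qed
  qed (use assms(2) in simp)
qed

end
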